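(* For any $(\hat\imath,\hat\jmath)\in\mathcal E$ with associated matrices $B_1,B_2$, $$\inf_{u^s\in\Delta_J}\Big(1+\big\langle e,B_1^{-1}B_2u^s\big\rangle\Big)>0.$$
   Context: Network: $\mathcal I=\{1,\dots,I\}$, $\mathcal J=\{1,\dots,J\}$, edges $\mathcal E\subset\mathcal I\times\mathcal J$ with the bipartite graph $\mathcal G=(\mathcal I\cup\mathcal J,\mathcal E)$ a tree; $\mathbb R^{\mathcal G}$ denotes arrays in $\mathbb R^{I\times J}$ vanishing off $\mathcal E$. Service rates $\mu_{ij}>0$ for $(i,j)\in\mathcal E$; $\mathcal J(i)=\{j:(i,j)\in\mathcal E\}$. Let $\mathcal D=\{(\alpha,\beta)\in\mathbb R^I\times\mathbb R^J:\sum_i\alpha_i=\sum_j\beta_j\}$ and $\Psi:\mathcal D\to\mathbb R^{\mathcal G}$ the unique linear map with $\sum_j\Psi_{ij}(\alpha,\beta)=\alpha_i$, $\sum_i\Psi_{ij}(\alpha,\beta)=\beta_j$. For $(\hat\imath,\hat\jmath)\in\mathcal E$, $B_1\in\mathbb R^{I\times I}$ and $B_2\in\mathbb R^{I\times J}$ are the unique matrices with column $\hat\jmath$ of $B_2$ zero and $\sum_{j\in\mathcal J(i)}\mu_{ij}\Psi_{ij}(\alpha,\beta)=(B_1\alpha+B_2\beta)_i$ for all $i$ and $(\alpha,\beta)\in\mathcal D$ ($B_1$ is invertible). $e$ is the all-ones vector and $\Delta_J=\{u\in\mathbb R^J_+:\langle e,u\rangle=1\}$. *)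

theory Defs
  imports "HOL-Analysis.Analysis"
begin

text \<open>Bipartite graph on vertex set 'i + 'j (Inl i for servers/classes i, Inr j for j),
  edge set E \<subseteq> 'i \<times> 'j.\<close>

definition bip_adj :: "('i \<times> 'j) set \<Rightarrow> ('i + 'j) \<Rightarrow> ('i + 'j) \<Rightarrow> bool" where
  "bip_adj E v w \<longleftrightarrow> (\<exists>i j. (i, j) \<in> E \<and> ((v = Inl i \<and> w = Inr j) \<or> (v = Inr j \<and> w = Inl i)))"

definition bip_connected :: "('i \<times> 'j) set \<Rightarrow> bool" where
  "bip_connected E \<longleftrightarrow> (\<forall>v w. (v, w) \<in> {(a, b). bip_adj E a b}\<^sup>*)"

definition bip_tree :: "('i \<times> 'j) set \<Rightarrow> bool" where
  "bip_tree E \<longleftrightarrow> bip_connected E \<and> (\<forall>e\<in>E. \<not> bip_connected (E - {e}))"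

definition in_RG :: "('i \<times> 'j) set \<Rightarrow> real^'j^'i \<Rightarrow> bool" where
  "in_RG E x \<longleftrightarrow> (\<forall>i j. (i, j) \<notin> E \<longrightarrow> x $ i $ j = 0)"

definition inD :: "real^'i::finite \<Rightarrow> real^'j::finite \<Rightarrow> bool" where
  "inD \<alpha> \<beta> \<longleftrightarrow> (\<Sum>i\<in>UNIV. \<alpha> $ i) = (\<Sum>j\<in>UNIV. \<beta> $ j)"

definition Psi :: "('i::finite \<times> 'j::finite) set \<Rightarrow> real^'i \<Rightarrow> real^'j \<Rightarrow> real^'j^'i" where
  "Psi E \<alpha> \<beta> = (THE x. in_RG E x \<and> (\<forall>i. (\<Sum>j\<in>UNIV. x $ i $ j) = \<alpha> $ i)
                                 \<and> (\<forall>j. (\<Sum>i\<in>UNIV. x $ i $ j) = \<beta> $ j))"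

definition simplexJ :: "(real^'j::finite) set" where
  "simplexJ = {u. (\<forall>j. 0 \<le> u $ j) \<and> (\<Sum>j\<in>UNIV. u $ j) = 1}"

end

theory Submission
  imports Defs
begin

text \<open>
  On a tree an array supported on the edges is determined by its row and column sums (the
  potential of a cut isolates each edge), so \<open>Psi\<close> inverts the margin map and the defining
  identity of \<open>B1, B2\<close> expresses the service rates of every array in \<open>\<real>\<^sup>\<G>\<close> through its
  margins. Propagating along the tree from \<open>\<jmath>\<close>, one finds for every class \<open>i\<close> an array serving
  \<open>i\<close> at unit rate whose column sums vanish except at \<open>\<jmath>\<close>, where they are positive; since
  column \<open>\<jmath>\<close> of \<open>B2\<close> is zero, these show that \<open>B1\<close> is invertible. Likewise for every \<open>j\<close>
  there is an array with zero service and column sums \<open>e\<^sub>j - s e\<^sub>\<jmath>\<close>, \<open>s > 0\<close>; it gives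
  \<open>B1\<^sup>-\<^sup>1 B2 e\<^sub>j = -\<alpha>\<close> with \<open>\<langle>e, \<alpha>\<rangle> = 1 - s\<close>, i.e. \<open>1 + \<langle>e, B1\<^sup>-\<^sup>1 B2 e\<^sub>j\<rangle> = s > 0\<close>. On the
  simplex the function is a convex combination of these values.
\<close>

lemma matrix_inv_left:
  fixes A :: "'a::semiring_1^'n^'n"
  assumes "invertible A"
  shows "matrix_inv A ** A = mat 1"
  using someI_ex[OF assms[unfolded invertible_def]] unfolding matrix_inv_def by blast

lemma invertible_if_axes_in_range:
  fixes A :: "real^'n^'n"
  assumes "\<And>i. \<exists>v. A *v v = axis i 1"
  shows "invertible A"
proof -
  obtain V where V: "\<And>i. A *v V i = axis i 1" using assms by metis
  have "(A ** transpose (\<chi> i. V i)) $ a $ b = (A *v V b) $ a" for a b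
    by (simp add: matrix_matrix_mult_def matrix_vector_mult_def transpose_def)
  hence "A ** transpose (\<chi> i. V i) = mat 1"
    by (simp add: V vec_eq_iff axis_def mat_def)
  thus ?thesis using invertible_right_inverse by blast
qed

lemma INF_simplex_pos:
  fixes N :: "real^'j::finite^'i::finite"
  assumes col: "\<And>j. 0 < 1 + (\<Sum>i\<in>UNIV. N $ i $ j)"
  shows "0 < (INF u\<in>simplexJ. 1 + (\<Sum>i\<in>UNIV. (N *v u) $ i))"
proof -
  define c where "c j = 1 + (\<Sum>i\<in>UNIV. N $ i $ j)" for j
  have "0 < Min (range c)" using col by (simp add: c_def)
  also have "Min (range c) \<le> (INF u\<in>simplexJ. 1 + (\<Sum>i\<in>UNIV. (N *v u) $ i))"
  proof (rule cINF_greatest)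
    have "axis undefined 1 \<in> simplexJ" by (simp add: simplexJ_def axis_def)
    thus "simplexJ \<noteq> {}" by blast
  next
    fix u :: "real^'j" assume "u \<in> simplexJ"
    hence u0: "\<And>j. 0 \<le> u $ j" and u1: "(\<Sum>j\<in>UNIV. u $ j) = 1"
      unfolding simplexJ_def by auto
    \<comment> \<open>On the simplex the affine function is the \<open>u\<close>-weighted mean of the \<open>c j\<close>.\<close>
    have "(\<Sum>i\<in>UNIV. (N *v u) $ i) = (\<Sum>j\<in>UNIV. u $ j * (\<Sum>i\<in>UNIV. N $ i $ j))"
      unfolding matrix_vector_mult_def vec_lambda_beta sum_distrib_left
      by (subst sum.swap) (simp add: mult.commute)
    hence "1 + (\<Sum>i\<in>UNIV. (N *v u) $ i) = (\<Sum>j\<in>UNIV. u $ j * c j)"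
      by (simp add: c_def distrib_left sum.distrib u1)
    moreover have "(\<Sum>j\<in>UNIV. u $ j * Min (range c)) \<le> (\<Sum>j\<in>UNIV. u $ j * c j)"
      by (intro sum_mono mult_left_mono) (simp_all add: u0)
    ultimately show "Min (range c) \<le> 1 + (\<Sum>i\<in>UNIV. (N *v u) $ i)"
      by (simp add: sum_distrib_right[symmetric] u1)
  qed
  finally show ?thesis .
qed

definition row_sums :: "real^'j::finite^'i::finite \<Rightarrow> real^'i" where
  "row_sums x = (\<chi> i. \<Sum>j\<in>UNIV. x $ i $ j)"

definition col_sums :: "real^'j::finite^'i::finite \<Rightarrow> real^'j" where
  "col_sums x = (\<chi> j. \<Sum>i\<in>UNIV. x $ i $ j)"

definition service :: "('i \<Rightarrow> 'j \<Rightarrow> real) \<Rightarrow> real^'j::finite^'i::finite \<Rightarrow> real^'i" where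
  "service \<mu> x = (\<chi> i. \<Sum>j\<in>UNIV. \<mu> i j * x $ i $ j)"

lemma sum_row_sums_eq_sum_col_sums: "(\<Sum>i\<in>UNIV. row_sums x $ i) = (\<Sum>j\<in>UNIV. col_sums x $ j)"
  unfolding row_sums_def col_sums_def vec_lambda_beta by (rule sum.swap)

lemma inD_row_sums_col_sums: "inD (row_sums x) (col_sums x)"
  unfolding inD_def by (rule sum_row_sums_eq_sum_col_sums)

lemma service_diff: "service \<mu> (x - y) = service \<mu> x - service \<mu> y"
  by (simp add: service_def vec_eq_iff sum_subtractf right_diff_distrib)

lemma service_scaleR: "service \<mu> (c *\<^sub>R x) = c *\<^sub>R service \<mu> x"
  by (simp add: service_def vec_eq_iff sum_distrib_left mult.left_commute)

lemma col_sums_diff: "col_sums (x - y) = col_sums x - col_sums y"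
  by (simp add: col_sums_def vec_eq_iff sum_subtractf)

lemma col_sums_scaleR: "col_sums (c *\<^sub>R x) = c *\<^sub>R col_sums x"
  by (simp add: col_sums_def vec_eq_iff sum_distrib_left)

lemma service_axis_axis: "service \<mu> (axis i (axis j 1)) = \<mu> i j *\<^sub>R axis i 1"
  by (simp add: service_def vec_eq_iff axis_def if_distrib[of "(*) _"] cong: if_cong)

lemma col_sums_axis_axis: "col_sums (axis i (axis j 1) :: real^'j::finite^'i::finite) = axis j 1"
  by (simp add: col_sums_def vec_eq_iff axis_def if_distrib[of "\<lambda>v. v $ _"] cong: if_cong)

lemma in_RG_diff: "in_RG E x \<Longrightarrow> in_RG E y \<Longrightarrow> in_RG E (x - y)"
  by (simp add: in_RG_def)

lemma in_RG_scaleR: "in_RG E x \<Longrightarrow> in_RG E (c *\<^sub>R x)"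
  by (simp add: in_RG_def)

lemma in_RG_axis_axis: "(i, j) \<in> E \<Longrightarrow> in_RG E (axis i (axis j 1))"
  by (auto simp: in_RG_def axis_def)

lemma bip_tree_edge_cut:
  assumes tree: "bip_tree E" and ab: "(a, b) \<in> E"
  obtains C where "Inl a \<in> C" "Inr b \<notin> C"
    "\<And>i j. (i, j) \<in> E \<Longrightarrow> (i, j) \<noteq> (a, b) \<Longrightarrow> Inl i \<in> C \<longleftrightarrow> Inr j \<in> C"
proof
  define R where "R = {(v, w). bip_adj (E - {(a, b)}) v w}"
  have "sym R" unfolding R_def bip_adj_def sym_def by blast
  hence symR: "(v, w) \<in> R\<^sup>* \<Longrightarrow> (w, v) \<in> R\<^sup>*" for v w
    using sym_rtrancl unfolding sym_def by blast
  show "Inl a \<in> {v. (Inl a, v) \<in> R\<^sup>*}" by simp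
  show "Inr b \<notin> {v. (Inl a, v) \<in> R\<^sup>*}"
  proof
    assume "Inr b \<in> {v. (Inl a, v) \<in> R\<^sup>*}"
    hence "(Inl a, Inr b) \<in> R\<^sup>*" "(Inr b, Inl a) \<in> R\<^sup>*" using symR by auto
    hence "{(v, w). bip_adj E v w} \<subseteq> R\<^sup>*"
      unfolding R_def bip_adj_def by blast
    hence "bip_connected (E - {(a, b)})"
      using tree rtrancl_subset_rtrancl unfolding bip_tree_def bip_connected_def R_def by blast
    thus False using tree ab unfolding bip_tree_def by blast
  qed
  fix i j assume "(i, j) \<in> E" "(i, j) \<noteq> (a, b)"
  hence "(Inl i, Inr j) \<in> R" "(Inr j, Inl i) \<in> R" unfolding R_def bip_adj_def by blast+
  thus "Inl i \<in> {v. (Inl a, v) \<in> R\<^sup>*} \<longleftrightarrow> Inr j \<in> {v. (Inl a, v) \<in> R\<^sup>*}"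
    by (auto intro: rtrancl_into_rtrancl)
qed

lemma bip_tree_zero_margins:
  assumes tree: "bip_tree E" and z: "in_RG E z"
    and rows: "row_sums z = 0" and cols: "col_sums z = 0"
  shows "z = 0"
proof -
  have "z $ a $ b = 0" if ab: "(a, b) \<in> E" for a b
  proof -
    obtain C where a: "Inl a \<in> C" and b: "Inr b \<notin> C"
      and cut: "\<And>i j. (i, j) \<in> E \<Longrightarrow> (i, j) \<noteq> (a, b) \<Longrightarrow> Inl i \<in> C \<longleftrightarrow> Inr j \<in> C"
      using bip_tree_edge_cut[OF tree ab] by blast
    define \<phi> :: "_ \<Rightarrow> real" where "\<phi> v = (if v \<in> C then 1 else 0)" for v
    \<comment> \<open>Pairing \<open>z\<close> with the potential difference across the cut isolates the cut edge.\<close>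
    have cut_term: "z $ i $ j * (\<phi> (Inl i) - \<phi> (Inr j)) = (if j = b then if i = a then z $ a $ b else 0 else 0)" for i j
      using z a b cut[of i j] unfolding \<phi>_def in_RG_def by auto
    have "(\<Sum>i\<in>UNIV. \<Sum>j\<in>UNIV. z $ i $ j * (\<phi> (Inl i) - \<phi> (Inr j)))
        = (\<Sum>i\<in>UNIV. \<phi> (Inl i) * row_sums z $ i) - (\<Sum>j\<in>UNIV. \<phi> (Inr j) * col_sums z $ j)"
    proof -
      have "(\<Sum>i\<in>UNIV. \<Sum>j\<in>UNIV. z $ i $ j * \<phi> (Inr j))
          = (\<Sum>j\<in>UNIV. \<Sum>i\<in>UNIV. z $ i $ j * \<phi> (Inr j))"
        by (rule sum.swap)
      thus ?thesis
        by (simp add: row_sums_def col_sums_def right_diff_distrib sum_subtractf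
            sum_distrib_left sum_distrib_right mult.commute)
    qed
    also have "\<dots> = 0" by (simp add: rows cols)
    finally show ?thesis by (simp add: cut_term)
  qed
  with z show ?thesis by (auto simp: vec_eq_iff in_RG_def)
qed

lemma Psi_row_sums_col_sums:
  assumes tree: "bip_tree E" and x: "in_RG E x"
  shows "Psi E (row_sums x) (col_sums x) = x"
  unfolding Psi_def
proof (rule the_equality)
  fix y assume y: "in_RG E y \<and> (\<forall>i. (\<Sum>j\<in>UNIV. y $ i $ j) = row_sums x $ i)
                    \<and> (\<forall>j. (\<Sum>i\<in>UNIV. y $ i $ j) = col_sums x $ j)"
  have "y - x = 0"
    by (rule bip_tree_zero_margins[OF tree])
      (use x y in \<open>simp_all add: in_RG_diff vec_eq_iff row_sums_def col_sums_def sum_subtractf\<close>)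
  thus "y = x" by simp
qed (use x in \<open>simp add: row_sums_def col_sums_def\<close>)

definition unit_service_array ::
    "('i \<times> 'j) set \<Rightarrow> ('i \<Rightarrow> 'j \<Rightarrow> real) \<Rightarrow> 'j \<Rightarrow> 'i \<Rightarrow> real^'j::finite^'i::finite \<Rightarrow> bool" where
  "unit_service_array E \<mu> jhat i x \<longleftrightarrow>
     in_RG E x \<and> service \<mu> x = axis i 1 \<and> (\<exists>s>0. col_sums x = s *\<^sub>R axis jhat 1)"

definition null_service_array ::
    "('i \<times> 'j) set \<Rightarrow> ('i \<Rightarrow> 'j \<Rightarrow> real) \<Rightarrow> 'j \<Rightarrow> 'j \<Rightarrow> real^'j::finite^'i::finite \<Rightarrow> bool" where
  "null_service_array E \<mu> jhat j x \<longleftrightarrow>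
     in_RG E x \<and> service \<mu> x = 0 \<and> (\<exists>s>0. col_sums x = axis j 1 - s *\<^sub>R axis jhat 1)"

lemma null_service_array_zero: "null_service_array E \<mu> jhat jhat 0"
  unfolding null_service_array_def in_RG_def service_def col_sums_def
  by (auto simp: vec_eq_iff intro!: exI[of _ 1])

lemma unit_service_array_along_edge:
  assumes "(i, j) \<in> E" "\<mu> i j > 0" "null_service_array E \<mu> jhat j x"
  shows "unit_service_array E \<mu> jhat i (inverse (\<mu> i j) *\<^sub>R (axis i (axis j 1) - x))"
proof -
  obtain s where "s > 0" "col_sums x = axis j 1 - s *\<^sub>R axis jhat 1"
    using assms(3) unfolding null_service_array_def by blast
  hence "col_sums (inverse (\<mu> i j) *\<^sub>R (axis i (axis j 1) - x)) = (s / \<mu> i j) *\<^sub>R axis jhat 1"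
    "s / \<mu> i j > 0"
    using assms(2) by (simp_all add: col_sums_scaleR col_sums_diff col_sums_axis_axis divide_inverse)
  thus ?thesis
    using assms unfolding unit_service_array_def null_service_array_def
    by (auto simp: in_RG_scaleR in_RG_diff in_RG_axis_axis service_scaleR service_diff service_axis_axis)
qed

lemma null_service_array_along_edge:
  assumes "(i, j) \<in> E" "\<mu> i j > 0" "unit_service_array E \<mu> jhat i x"
  shows "null_service_array E \<mu> jhat j (axis i (axis j 1) - \<mu> i j *\<^sub>R x)"
proof -
  obtain s where "s > 0" "col_sums x = s *\<^sub>R axis jhat 1"
    using assms(3) unfolding unit_service_array_def by blast
  hence "col_sums (axis i (axis j 1) - \<mu> i j *\<^sub>R x) = axis j 1 - (\<mu> i j * s) *\<^sub>R axis jhat 1"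
    "\<mu> i j * s > 0"
    using assms(2) by (simp_all add: col_sums_scaleR col_sums_diff col_sums_axis_axis)
  thus ?thesis
    using assms unfolding unit_service_array_def null_service_array_def
    by (auto simp: in_RG_scaleR in_RG_diff in_RG_axis_axis service_scaleR service_diff service_axis_axis)
qed

lemma service_arrays_exist:
  assumes conn: "bip_connected E" and mu_pos: "\<And>i j. (i, j) \<in> E \<Longrightarrow> \<mu> i j > 0"
  shows "\<exists>x. unit_service_array E \<mu> jhat i x" and "\<exists>x. null_service_array E \<mu> jhat j x"
proof -
  define P where "P v \<longleftrightarrow> (case v of
      Inl i \<Rightarrow> \<exists>x. unit_service_array E \<mu> jhat i x
    | Inr j \<Rightarrow> \<exists>x. null_service_array E \<mu> jhat j x)" for v
  have "P v" for v
  proof -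
    have "(v, Inr jhat) \<in> {(a, b). bip_adj E a b}\<^sup>*"
      using conn unfolding bip_connected_def by blast
    thus ?thesis
    proof (induction rule: converse_rtrancl_induct)
      case base
      show ?case unfolding P_def using null_service_array_zero by auto
    next
      case (step v w)
      then obtain i j where ij: "(i, j) \<in> E" "v = Inl i \<and> w = Inr j \<or> v = Inr j \<and> w = Inl i"
        unfolding bip_adj_def by blast
      with step.IH show ?case
        unfolding P_def
        using unit_service_array_along_edge[of i j E \<mu>, OF ij(1) mu_pos[OF ij(1)]]
          null_service_array_along_edge[of i j E \<mu>, OF ij(1) mu_pos[OF ij(1)]]
        by auto blast+
    qed
  qed
  from this[of "Inl i"] this[of "Inr j"]
  show "\<exists>x. unit_service_array E \<mu> jhat i x" and "\<exists>x. null_service_array E \<mu> jhat j x"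
    unfolding P_def by simp_all
qed

locale tree_network =
  fixes E :: "('i::finite \<times> 'j::finite) set" and \<mu> :: "'i \<Rightarrow> 'j \<Rightarrow> real" and jhat :: 'j
    and B1 :: "real^'i^'i" and B2 :: "real^'j^'i"
  assumes tree: "bip_tree E"
    and mu_pos: "\<And>i j. (i, j) \<in> E \<Longrightarrow> \<mu> i j > 0"
    and B2_col: "\<And>i. B2 $ i $ jhat = 0"
    and B_def: "\<And>\<alpha> \<beta> i. inD \<alpha> \<beta> \<Longrightarrow>
        (\<Sum>j\<in>{j. (i, j) \<in> E}. \<mu> i j * Psi E \<alpha> \<beta> $ i $ j) = (B1 *v \<alpha> + B2 *v \<beta>) $ i"
begin

lemma bip_connected_E: "bip_connected E"
  using tree unfolding bip_tree_def by blast

lemma service_eq_B: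
  assumes x: "in_RG E x"
  shows "service \<mu> x = B1 *v row_sums x + B2 *v col_sums x"
proof -
  have "(\<Sum>j\<in>UNIV. \<mu> i j * x $ i $ j) = (\<Sum>j\<in>{j. (i, j) \<in> E}. \<mu> i j * x $ i $ j)" for i
    by (rule sum.mono_neutral_right) (use x in \<open>auto simp: in_RG_def\<close>)
  also have "\<dots> i = (B1 *v row_sums x + B2 *v col_sums x) $ i" for i
    using B_def[OF inD_row_sums_col_sums, of i x] by (simp add: Psi_row_sums_col_sums[OF tree x])
  finally show ?thesis by (simp add: service_def vec_eq_iff)
qed

lemma B2_axis_jhat: "B2 *v axis jhat 1 = 0"
  by (simp add: matrix_vector_mult_basis column_def B2_col vec_eq_iff)

lemma invertible_B1: "invertible B1"
proof (rule invertible_if_axes_in_range)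
  fix i
  obtain x where x: "unit_service_array E \<mu> jhat i x"
    using service_arrays_exist(1)[of E \<mu>, OF bip_connected_E mu_pos] by blast
  then obtain s where "in_RG E x" "service \<mu> x = axis i 1" "col_sums x = s *\<^sub>R axis jhat 1"
    unfolding unit_service_array_def by blast
  hence "B1 *v row_sums x = axis i 1"
    using service_eq_B by (simp add: matrix_vector_mult_scaleR B2_axis_jhat)
  thus "\<exists>v. B1 *v v = axis i 1" ..
qed

lemma column_sum_pos: "0 < 1 + (\<Sum>i\<in>UNIV. (matrix_inv B1 ** B2) $ i $ j)"
proof -
  obtain x where x: "null_service_array E \<mu> jhat j x"
    using service_arrays_exist(2)[of E \<mu>, OF bip_connected_E mu_pos] by blast
  then obtain s where s: "s > 0" and "in_RG E x" "service \<mu> x = 0"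
    and col: "col_sums x = axis j 1 - s *\<^sub>R axis jhat 1"
    unfolding null_service_array_def by blast
  hence "B1 *v row_sums x + B2 *v axis j 1 = 0"
    using service_eq_B
    by (simp add: matrix_vector_mult_diff_distrib matrix_vector_mult_scaleR B2_axis_jhat)
  hence "matrix_inv B1 *v (B1 *v row_sums x + B2 *v axis j 1) = 0" by simp
  hence "row_sums x + (matrix_inv B1 ** B2) *v axis j 1 = 0"
    by (simp add: matrix_vector_right_distrib matrix_vector_mul_assoc matrix_inv_left[OF invertible_B1])
  hence "(matrix_inv B1 ** B2) $ i $ j = - row_sums x $ i" for i
    by (simp add: matrix_vector_mult_basis column_def vec_eq_iff eq_neg_iff_add_eq_0 add.commute)
  hence "(\<Sum>i\<in>UNIV. (matrix_inv B1 ** B2) $ i $ j) = - (\<Sum>k\<in>UNIV. col_sums x $ k)"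
    by (simp add: sum_negf sum_row_sums_eq_sum_col_sums)
  also have "(\<Sum>k\<in>UNIV. col_sums x $ k) = 1 - s"
    by (simp add: col sum_subtractf axis_def sum_distrib_left[symmetric])
  finally show ?thesis using s by simp
qed
end

theorem lemma2:
  fixes E :: "('i::finite \<times> 'j::finite) set"
    and \<mu> :: "'i \<Rightarrow> 'j \<Rightarrow> real"
    and ihat :: 'i and jhat :: 'j
    and B1 :: "real^'i^'i" and B2 :: "real^'j^'i"
  assumes tree: "bip_tree E"
    and mu_pos: "\<And>i j. (i, j) \<in> E \<Longrightarrow> \<mu> i j > 0"
    and edge: "(ihat, jhat) \<in> E"
    and B2_col: "\<And>i. B2 $ i $ jhat = 0"
    and B_def: "\<And>\<alpha> \<beta> i. inD \<alpha> \<beta> \<Longrightarrow>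
        (\<Sum>j\<in>{j. (i, j) \<in> E}. \<mu> i j * Psi E \<alpha> \<beta> $ i $ j) = (B1 *v \<alpha> + B2 *v \<beta>) $ i"
  shows "(INF u\<in>simplexJ. 1 + (\<Sum>i\<in>UNIV. (matrix_inv B1 *v (B2 *v u)) $ i)) > 0"
proof -
  interpret tree_network E \<mu> jhat B1 B2
    using tree mu_pos B2_col B_def by unfold_locales
  have "0 < (INF u\<in>simplexJ. 1 + (\<Sum>i\<in>UNIV. ((matrix_inv B1 ** B2) *v u) $ i))"
    by (rule INF_simplex_pos[OF column_sum_pos])
  thus ?thesis by (simp add: matrix_vector_mul_assoc)
qed

end
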